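(* Let $\mu$ be an infinite cardinal and $k\geq 1$ a natural number. Then $\mu\to_{hc}(\mu)^2_k$; that is, for every coloring $c:[\mu]^2\to k$ there exist $i<k$ and $X\subseteq\mu$ with $|X|=\mu$ such that the graph $(X,\,c^{-1}(i)\cap[X]^2)$ is highly connected.
   Context: For a set $S$ and cardinal $\theta$, $[S]^\theta$ denotes the set of subsets of $S$ of size $\theta$; the complete graph on a cardinal $\nu$ has vertex set $\nu$ and edge set $[\nu]^2$. A graph $G=(V,E)$ is $\kappa$-connected if for every set $D\subseteq V$ with $|D|<\kappa$ the graph induced on $V\setminus D$ is connected. $G$ is highly connected if it is $|V|$-connected. For cardinals $\nu,\mu,\lambda$, write $\nu\to_{hc}(\mu)^2_\lambda$ if for every $c:[\nu]^2\to\lambda$ there are $\xi<\lambda$ and $X\in[\nu]^\mu$ such that $(X,c^{-1}(\xi)\cap[X]^2)$ is highly connected. *)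

theory Defs
  imports Main "HOL-Library.Equipollence"
begin

definition two_subsets :: "'a set \<Rightarrow> 'a set set" where
  "two_subsets S = {e. e \<subseteq> S \<and> card e = 2}"

definition graph_connected :: "'a set \<Rightarrow> 'a set set \<Rightarrow> bool" where
  "graph_connected V E \<longleftrightarrow>
     (\<forall>u\<in>V. \<forall>v\<in>V. (u, v) \<in> ({(x, y). x \<in> V \<and> y \<in> V \<and> {x, y} \<in> E})\<^sup>*)"

definition induced_edges :: "'a set set \<Rightarrow> 'a set \<Rightarrow> 'a set set" where
  "induced_edges E W = E \<inter> two_subsets W"

definition highly_connected :: "'a set \<Rightarrow> 'a set set \<Rightarrow> bool" where
  "highly_connected V E \<longleftrightarrow>
     (\<forall>D. D \<subseteq> V \<and> D \<prec> V \<longrightarrow> graph_connected (V - D) (induced_edges E (V - D)))"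

end

theory Submission
  imports Defs
begin

text \<open>Fix a uniform ultrafilter \<open>U\<close> on \<open>M\<close>, i.e. one containing every set whose complement
  has size less than \<open>|M|\<close>; all members of \<open>U\<close> then have size \<open>|M|\<close>. For each vertex \<open>x\<close>
  some colour class of its neighbourhood lies in \<open>U\<close>, and again by ultrafilter
  ex_mem_of_subset_Union one colour \<open>i\<close> is chosen by a set \<open>X \<in> U\<close> of vertices. Any two vertices of
  \<open>X\<close> have \<open>|M|\<close> many common \<open>i\<close>-neighbours in \<open>X\<close>, since their \<open>i\<close>-neighbourhoods and \<open>X\<close>
  meet in a member of \<open>U\<close>; so deleting fewer than \<open>|M|\<close> vertices leaves a graph of
  diameter at most 2.\<close>

lemma lesspoll_iff_card_of_ordLess: "A \<prec> B \<longleftrightarrow> ordLess2 (card_of A) (card_of B)"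
proof -
  have "A \<lesssim> B \<longleftrightarrow> ordLeq2 (card_of A) (card_of B)"
    by (simp add: lepoll_def card_of_ordLeq[symmetric])
  then show ?thesis
    unfolding lesspoll_def eqpoll_iff_card_of_ordIso
    using ordLeq_iff_ordLess_or_ordIso not_ordLess_ordIso ordLess_imp_ordLeq by blast
qed

lemma Un_lesspoll_infinite: "infinite M \<Longrightarrow> A \<prec> M \<Longrightarrow> B \<prec> M \<Longrightarrow> A \<union> B \<prec> M"
  by (simp add: lesspoll_iff_card_of_ordLess card_of_Un_ordLess_infinite)

lemma empty_lesspoll: "M \<noteq> {} \<Longrightarrow> {} \<prec> M"
  using eqpoll_sym by (fastforce simp: lesspoll_def)

definition colour_neighbours :: "('a set \<Rightarrow> 'c) \<Rightarrow> 'c \<Rightarrow> 'a set \<Rightarrow> 'a \<Rightarrow> 'a set" where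
  "colour_neighbours c i M x = {y \<in> M. y \<noteq> x \<and> c {x, y} = i}"

locale uniform_filter =
  fixes M :: "'a set" and F :: "'a set set"
  assumes infinite: "infinite M"
    and subset: "A \<in> F \<Longrightarrow> A \<subseteq> M"
    and mono: "A \<in> F \<Longrightarrow> A \<subseteq> B \<Longrightarrow> B \<subseteq> M \<Longrightarrow> B \<in> F"
    and Int: "A \<in> F \<Longrightarrow> B \<in> F \<Longrightarrow> A \<inter> B \<in> F"
    and empty_notin: "{} \<notin> F"
    and co_small: "A \<subseteq> M \<Longrightarrow> M - A \<prec> M \<Longrightarrow> A \<in> F"
begin

lemma carrier_mem: "M \<in> F"
proof -
  have "M - M \<prec> M" using empty_lesspoll[OF infinite_imp_nonempty[OF infinite]] by simp
  then show ?thesis using co_small by blast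
qed

lemma co_finite: "A \<subseteq> M \<Longrightarrow> finite (M - A) \<Longrightarrow> A \<in> F"
  using co_small finite_lesspoll_infinite infinite by blast

lemma not_subset_lesspoll:
  assumes "A \<in> F" and "D \<prec> M"
  shows "\<not> A \<subseteq> D"
proof
  assume "A \<subseteq> D"
  then have "M - (M - A) \<prec> M"
    using assms subset lesspoll_trans1 subset_imp_lepoll by (metis Diff_Diff_Int Int_absorb1)
  then have "A \<inter> (M - A) \<in> F" using assms(1) co_small Int by blast
  then show False using empty_notin by simp
qed

lemma mem_eqpoll: "A \<in> F \<Longrightarrow> A \<approx> M"
  using not_subset_lesspoll[of A A] subset_imp_lepoll[OF subset] unfolding lesspoll_def by auto

end

locale uniform_ultrafilter = uniform_filter +
  assumes ultra: "A \<subseteq> M \<Longrightarrow> A \<in> F \<or> M - A \<in> F"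
begin

lemma ex_mem_of_subset_Union:
  assumes "\<And>i. P i \<subseteq> M"
  shows "B \<in> F \<Longrightarrow> B \<subseteq> (\<Union>i<(k::nat). P i) \<Longrightarrow> \<exists>i<k. P i \<in> F"
proof (induction k arbitrary: B)
  case 0
  then show ?case using empty_notin by auto
next
  case (Suc k)
  show ?case
  proof (cases "P k \<in> F")
    case False
    then have "B \<inter> (M - P k) \<in> F"
      using ultra assms Suc.prems(1) Int by blast
    moreover have "B \<inter> (M - P k) \<subseteq> (\<Union>i<k. P i)"
      using Suc.prems(2) by (auto simp: lessThan_Suc)
    ultimately show ?thesis using Suc.IH less_SucI by blast
  qed auto
qed

lemma ex_colour_neighbours_mem:
  fixes c :: "'a set \<Rightarrow> nat"
  assumes "\<forall>e\<in>two_subsets M. c e < k" and "x \<in> M"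
  shows "\<exists>i<k. colour_neighbours c i M x \<in> F"
proof (rule ex_mem_of_subset_Union)
  have "finite (M - (M - {x}))" by (rule finite_subset[of _ "{x}"]) auto
  then show "M - {x} \<in> F" by (intro co_finite) auto
  show "M - {x} \<subseteq> (\<Union>i<k. colour_neighbours c i M x)"
  proof
    fix y assume y: "y \<in> M - {x}"
    then have "{x, y} \<in> two_subsets M"
      using assms(2) unfolding two_subsets_def by auto
    then show "y \<in> (\<Union>i<k. colour_neighbours c i M x)"
      using y assms(1) unfolding colour_neighbours_def by auto
  qed
qed (auto simp: colour_neighbours_def)

lemma ex_colour_neighbours_mem_on_large_set:
  fixes c :: "'a set \<Rightarrow> nat"
  assumes "\<forall>e\<in>two_subsets M. c e < k"
  shows "\<exists>i<k. {x \<in> M. colour_neighbours c i M x \<in> F} \<in> F"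
proof (rule ex_mem_of_subset_Union[OF _ carrier_mem])
  show "M \<subseteq> (\<Union>i<k. {x \<in> M. colour_neighbours c i M x \<in> F})"
    using ex_colour_neighbours_mem[OF assms] by blast
qed auto

end

lemma uniform_filter_extend:
  assumes "uniform_filter M F" and "\<forall>A\<in>F. A \<inter> S \<noteq> {}"
  shows "uniform_filter M {B. B \<subseteq> M \<and> (\<exists>A\<in>F. A \<inter> S \<subseteq> B)}"
proof -
  interpret uniform_filter M F by fact
  show ?thesis
  proof
    fix A B assume "A \<in> {B. B \<subseteq> M \<and> (\<exists>A\<in>F. A \<inter> S \<subseteq> B)}"
      and "B \<in> {B. B \<subseteq> M \<and> (\<exists>A\<in>F. A \<inter> S \<subseteq> B)}"
    then obtain A1 A2 where "A1 \<in> F" "A2 \<in> F" "A1 \<inter> S \<subseteq> A" "A2 \<inter> S \<subseteq> B"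
      "A \<subseteq> M" by blast
    moreover from this have "A1 \<inter> A2 \<in> F" using Int by blast
    ultimately show "A \<inter> B \<in> {B. B \<subseteq> M \<and> (\<exists>A\<in>F. A \<inter> S \<subseteq> B)}" by blast
  next
    fix A B assume "A \<in> {B. B \<subseteq> M \<and> (\<exists>A\<in>F. A \<inter> S \<subseteq> B)}" "A \<subseteq> B" "B \<subseteq> M"
    then show "B \<in> {B. B \<subseteq> M \<and> (\<exists>A\<in>F. A \<inter> S \<subseteq> B)}" by blast
  next
    fix A assume "A \<subseteq> M" "M - A \<prec> M"
    then have "A \<in> F" by (rule co_small)
    then show "A \<in> {B. B \<subseteq> M \<and> (\<exists>A\<in>F. A \<inter> S \<subseteq> B)}"
      using \<open>A \<subseteq> M\<close> by blast
  qed (use infinite assms(2) in auto)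
qed

lemma uniform_filter_chain_Union:
  assumes "C \<in> chains {F. uniform_filter M F}" and "C \<noteq> {}"
  shows "uniform_filter M (\<Union>C)"
proof -
  have filters: "\<And>F. F \<in> C \<Longrightarrow> uniform_filter M F"
    and chain: "\<And>F G. F \<in> C \<Longrightarrow> G \<in> C \<Longrightarrow> F \<subseteq> G \<or> G \<subseteq> F"
    using assms(1) by (auto simp: chains_def chain_subset_def)
  obtain G where "G \<in> C" using assms(2) by blast
  show ?thesis
  proof
    fix A B assume "A \<in> \<Union>C" "B \<in> \<Union>C"
    then obtain F1 F2 where "F1 \<in> C" "F2 \<in> C" "A \<in> F1" "B \<in> F2" by blast
    with chain obtain F where "F \<in> C" "A \<in> F" "B \<in> F" by blast
    then show "A \<inter> B \<in> \<Union>C" using filters uniform_filter.Int by blast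
  next
    show "infinite M" using filters \<open>G \<in> C\<close> uniform_filter.infinite by blast
  next
    show "A \<in> \<Union>C" if "A \<subseteq> M" "M - A \<prec> M" for A
      using that filters \<open>G \<in> C\<close> uniform_filter.co_small by blast
  qed (use filters uniform_filter.subset uniform_filter.mono uniform_filter.empty_notin in blast)+
qed

lemma uniform_filter_co_small:
  assumes "infinite M"
  shows "uniform_filter M {A. A \<subseteq> M \<and> M - A \<prec> M}"
proof
  fix A B assume "A \<in> {A. A \<subseteq> M \<and> M - A \<prec> M}" "B \<in> {A. A \<subseteq> M \<and> M - A \<prec> M}"
  then show "A \<inter> B \<in> {A. A \<subseteq> M \<and> M - A \<prec> M}"
    using Un_lesspoll_infinite[OF assms, of "M - A" "M - B"] by (auto simp: Diff_Int)
next
  fix A B assume "A \<in> {A. A \<subseteq> M \<and> M - A \<prec> M}" "A \<subseteq> B" "B \<subseteq> M"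
  then show "B \<in> {A. A \<subseteq> M \<and> M - A \<prec> M}"
    using lesspoll_trans1[OF subset_imp_lepoll[of "M - B" "M - A"]] by blast
qed (use assms in auto)

lemma uniform_ultrafilter_exists:
  assumes "infinite M"
  shows "\<exists>U. uniform_ultrafilter M U"
proof -
  have "\<exists>U\<in>{F. uniform_filter M F}. \<forall>F\<in>C. F \<subseteq> U"
    if "C \<in> chains {F. uniform_filter M F}" for C
  proof (cases "C = {}")
    case False
    then have "uniform_filter M (\<Union>C)" by (rule uniform_filter_chain_Union[OF that])
    then show ?thesis by blast
  qed (use uniform_filter_co_small[OF assms] in blast)
  then have "\<exists>U\<in>{F. uniform_filter M F}. \<forall>F\<in>{F. uniform_filter M F}. U \<subseteq> F \<longrightarrow> F = U"
    by (intro Zorn_Lemma2) blast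
  then obtain U where U: "uniform_filter M U"
    and maximal: "\<And>F. uniform_filter M F \<Longrightarrow> U \<subseteq> F \<Longrightarrow> F = U"
    by blast
  interpret uniform_filter M U by (fact U)
  have "S \<in> U \<or> M - S \<in> U" if "S \<subseteq> M" for S
  proof (cases "\<forall>A\<in>U. A \<inter> S \<noteq> {}")
    case True
    let ?F = "{B. B \<subseteq> M \<and> (\<exists>A\<in>U. A \<inter> S \<subseteq> B)}"
    have "U \<subseteq> ?F" using subset by blast
    then have "?F = U" using maximal uniform_filter_extend[OF U True] by blast
    then show ?thesis using carrier_mem that by blast
  next
    case False
    then obtain A where "A \<in> U" "A \<subseteq> M - S" using subset by blast
    then show ?thesis using mono by blast
  qed
  then have "uniform_ultrafilter M U" by unfold_locales
  then show ?thesis by blast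
qed

lemma highly_connected_if_common_neighbours:
  assumes "E \<subseteq> two_subsets X"
    and "\<And>u v D. D \<prec> X \<Longrightarrow> u \<in> X - D \<Longrightarrow> v \<in> X - D \<Longrightarrow> u \<noteq> v \<Longrightarrow>
           \<exists>w\<in>X - D. {u, w} \<in> E \<and> {w, v} \<in> E"
  shows "highly_connected X E"
  unfolding highly_connected_def graph_connected_def
proof (intro allI impI ballI)
  fix D u v assume D: "D \<subseteq> X \<and> D \<prec> X" and u: "u \<in> X - D" and v: "v \<in> X - D"
  let ?R = "{(x, y). x \<in> X - D \<and> y \<in> X - D \<and> {x, y} \<in> induced_edges E (X - D)}"
  have edge: "(a, b) \<in> ?R" if "a \<in> X - D" "b \<in> X - D" "{a, b} \<in> E" for a b
    using that assms(1) unfolding induced_edges_def two_subsets_def by auto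
  show "(u, v) \<in> ?R\<^sup>*"
  proof (cases "u = v")
    case False
    then obtain w where "w \<in> X - D" "{u, w} \<in> E" "{w, v} \<in> E"
      using assms(2) D u v by blast
    then have "(u, w) \<in> ?R" "(w, v) \<in> ?R" using u v edge by auto
    then show ?thesis by (meson r_into_rtrancl rtrancl_trans)
  qed simp
qed

theorem mainTheorem1:
  fixes M :: "'a set" and k :: nat and c :: "'a set \<Rightarrow> nat"
  assumes "infinite M"
    and "k \<ge> 1"
    and "\<forall>e\<in>two_subsets M. c e < k"
  shows "\<exists>i<k. \<exists>X. X \<subseteq> M \<and> X \<approx> M \<and>
           highly_connected X {e \<in> two_subsets X. c e = i}"
proof -
  obtain U where "uniform_ultrafilter M U"
    using uniform_ultrafilter_exists[OF assms(1)] by blast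
  then interpret uniform_ultrafilter M U .
  let ?N = "colour_neighbours c"
  obtain i where "i < k" and X: "{x \<in> M. ?N i M x \<in> U} \<in> U"
    using ex_colour_neighbours_mem_on_large_set[OF assms(3)] by blast
  define X where "X = {x \<in> M. ?N i M x \<in> U}"
  have "X \<subseteq> M" and "X \<approx> M" using X mem_eqpoll unfolding X_def by auto
  moreover have "highly_connected X {e \<in> two_subsets X. c e = i}"
  proof (rule highly_connected_if_common_neighbours)
    fix u v D assume D: "D \<prec> X" and u: "u \<in> X - D" and v: "v \<in> X - D" and "u \<noteq> v"
    have "?N i M u \<inter> ?N i M v \<inter> X \<in> U" using u v X Int unfolding X_def by auto
    moreover have "D \<prec> M" using D \<open>X \<approx> M\<close> lesspoll_eq_trans by blast
    ultimately obtain w where "w \<in> ?N i M u" "w \<in> ?N i M v" "w \<in> X - D"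
      using not_subset_lesspoll by blast
    then show "\<exists>w\<in>X - D. {u, w} \<in> {e \<in> two_subsets X. c e = i} \<and>
                 {w, v} \<in> {e \<in> two_subsets X. c e = i}"
      using u v unfolding colour_neighbours_def two_subsets_def
      by (intro bexI[of _ w]) (auto simp: insert_commute)
  qed auto
  ultimately show ?thesis using \<open>i < k\<close> by blast
qed

end
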